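(* Let $X_1,X_2,\dots$ be nonnegative random variables (task durations), $S_1,S_2,\dots$ i.i.d. exponential random variables with parameter $\lambda>0$, and $a_1,a_2,\dots\in\{0,1\}$ arbitrary decisions. Let $T>0$, $\theta=\min\{n\in\mathbb N:\sum_{i=1}^n(S_i+X_ia_i)>T\}$ and $S=2\lambda T+1$. Then $$\mathbb E\big[(\theta-S)_+\big]\le4.$$
   Context: $(z)_+=\max\{z,0\}$. *)

theory Defs
  imports "HOL-Probability.Probability"
begin

definition stop_time :: "real \<Rightarrow> (nat \<Rightarrow> 'a \<Rightarrow> real) \<Rightarrow> (nat \<Rightarrow> 'a \<Rightarrow> real)
    \<Rightarrow> (nat \<Rightarrow> 'a \<Rightarrow> real) \<Rightarrow> 'a \<Rightarrow> nat" where
  "stop_time T S X a \<omega> = (LEAST n. (\<Sum>i=1..n. S i \<omega> + X i \<omega> * a i \<omega>) > T)"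

end

theory Submission
  imports Defs
begin

text \<open>
  If \<open>\<theta> > c + k\<close> with \<open>c = 2\<lambda>T + 1\<close>, then the first \<open>n\<^sub>k = \<lfloor>c + k\<rfloor>\<close>
  exponential summands \<open>S\<^sub>i\<close> alone add up to at most \<open>T\<close>, since the \<open>X\<^sub>i a\<^sub>i\<close> are
  nonnegative. A Chernoff bound with parameter \<open>\<lambda>\<close>, for which \<open>E exp(-\<lambda> S\<^sub>i) = 1/2\<close>,
  bounds the probability of this by \<open>exp(\<lambda>T) 2^(-n\<^sub>k) \<le> 2^(-k)\<close>, using \<open>ln 2 \<ge> 1/2\<close>.
  Summing these tail probabilities over \<open>k\<close> gives \<open>E (\<theta> - c)\<^sub>+ \<le> 2\<close>.
\<close>

lemma ennreal_le_suminf_less: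
  "ennreal x \<le> (\<Sum>k. if real k < x then 1 else 0)"
proof (cases "x \<le> 0")
  case False
  define m where "m = nat \<lceil>x\<rceil>"
  have "ennreal x \<le> ennreal (real m)"
    unfolding m_def by (intro ennreal_leI) linarith
  also have "\<dots> = (\<Sum>k<m. if real k < x then 1 else 0)"
  proof -
    have "real k < x" if "k < m" for k
    proof -
      have "int k < \<lceil>x\<rceil>"
        using that False by (simp add: m_def)
      then show ?thesis
        by (simp add: less_ceiling_iff)
    qed
    then show ?thesis
      by (simp add: ennreal_of_nat_eq_real_of_nat)
  qed
  also have "\<dots> \<le> (\<Sum>k. if real k < x then 1 else 0)"
    by (rule sum_le_suminf) auto
  finally show ?thesis .
qed (simp add: ennreal_neg)

lemma exp_div_two_pow_le:
  fixes x :: real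
  assumes "0 \<le> x" and "2 * x + real k \<le> real n"
  shows "exp x / 2 ^ n \<le> (1/2) ^ k"
proof -
  have "1 \<le> 2 * ln (2::real)"
    using ln2_ge_two_thirds by linarith
  then have "exp x \<le> exp (2 * x * ln 2)"
    using assms(1) mult_left_mono[of 1 "2 * ln 2" x] by (simp add: ac_simps)
  also have "\<dots> = 2 powr (2 * x)"
    by (simp add: powr_def mult.commute)
  finally have "exp x / 2 ^ n \<le> 2 powr (2 * x) / 2 powr real n"
    by (simp add: powr_realpow divide_right_mono)
  also have "\<dots> = 2 powr (2 * x - real n)"
    by (simp add: powr_diff)
  also have "\<dots> \<le> 2 powr (- real k)"
    using assms(2) by simp
  also have "\<dots> = (1/2) ^ k"
    by (simp add: powr_minus powr_realpow power_one_over inverse_eq_divide)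
  finally show ?thesis .
qed

lemma exponential_density_mult_exp:
  assumes "0 < l + t"
  shows "exponential_density l x * exp (- t * x) = l / (l + t) * exponential_density (l + t) x"
  using assms by (simp add: exponential_density_def exp_add[symmetric] field_simps)

lemma nn_integral_exp_exponential:
  assumes D: "distributed M lborel Y (exponential_density l)" and "0 < l" and "0 \<le> t"
  shows "(\<integral>\<^sup>+\<omega>. exp (- t * Y \<omega>) \<partial>M) = ennreal (l / (l + t))"
proof -
  have "(\<integral>\<^sup>+\<omega>. exp (- t * Y \<omega>) \<partial>M)
      = (\<integral>\<^sup>+x. ennreal (exponential_density l x) * exp (- t * x) \<partial>lborel)"
    by (rule distributed_nn_integral[OF D, symmetric]) simp
  also have "\<dots> = (\<integral>\<^sup>+x. ennreal (l / (l + t)) * exponential_density (l + t) x \<partial>lborel)"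
  proof (rule nn_integral_cong)
    fix x
    have "exponential_density l x * exp (- t * x) = l / (l + t) * exponential_density (l + t) x"
      using assms by (intro exponential_density_mult_exp) simp
    then show "ennreal (exponential_density l x) * exp (- t * x)
        = ennreal (l / (l + t)) * exponential_density (l + t) x"
      using assms by (simp flip: ennreal_mult)
  qed
  also have "\<dots> = ennreal (l / (l + t)) * (\<integral>\<^sup>+x. exponential_density (l + t) x \<partial>lborel)"
    by (rule nn_integral_cmult) simp
  also have "(\<integral>\<^sup>+x. exponential_density (l + t) x \<partial>lborel) = 1"
    using prob_space.emeasure_space_1[OF prob_space_exponential_density, of "l + t"] assms
    by (simp add: emeasure_density)
  finally show ?thesis by simp
qed

lemma (in prob_space) emeasure_sum_le_Chernoff:
  assumes indep: "indep_vars (\<lambda>_. borel) S I" and "finite I" and "0 \<le> t"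
  shows "emeasure M {\<omega>\<in>space M. (\<Sum>i\<in>I. S i \<omega>) \<le> T}
    \<le> exp (t * T) * (\<Prod>i\<in>I. \<integral>\<^sup>+\<omega>. exp (- t * S i \<omega>) \<partial>M)"
proof -
  have [measurable]: "S i \<in> borel_measurable M" if "i \<in> I" for i
    using indep that by (simp add: indep_vars_def)
  have "emeasure M {\<omega>\<in>space M. (\<Sum>i\<in>I. S i \<omega>) \<le> T}
      = (\<integral>\<^sup>+\<omega>. indicator {\<omega>\<in>space M. (\<Sum>i\<in>I. S i \<omega>) \<le> T} \<omega> \<partial>M)"
    using \<open>finite I\<close> by (intro nn_integral_indicator[symmetric]) measurable
  also have "\<dots> \<le> (\<integral>\<^sup>+\<omega>. exp (t * T) * (\<Prod>i\<in>I. ennreal (exp (- t * S i \<omega>))) \<partial>M)"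
  proof (rule nn_integral_mono)
    fix \<omega>
    have "(\<Prod>i\<in>I. ennreal (exp (- t * S i \<omega>))) = exp (- t * (\<Sum>i\<in>I. S i \<omega>))"
      using \<open>finite I\<close> by (simp add: prod_ennreal exp_sum sum_distrib_left)
    moreover have "1 \<le> exp (t * T) * exp (- t * (\<Sum>i\<in>I. S i \<omega>))" if "(\<Sum>i\<in>I. S i \<omega>) \<le> T"
      using that \<open>0 \<le> t\<close> by (simp flip: exp_add add: mult_left_mono right_diff_distrib[symmetric])
    ultimately show "indicator {\<omega>\<in>space M. (\<Sum>i\<in>I. S i \<omega>) \<le> T} \<omega>
        \<le> exp (t * T) * (\<Prod>i\<in>I. ennreal (exp (- t * S i \<omega>)))"
      by (auto simp: indicator_def ennreal_mult[symmetric] ennreal_leI)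
  qed
  also have "\<dots> = exp (t * T) * (\<integral>\<^sup>+\<omega>. (\<Prod>i\<in>I. ennreal (exp (- t * S i \<omega>))) \<partial>M)"
    by (rule nn_integral_cmult) measurable
  also have "(\<integral>\<^sup>+\<omega>. (\<Prod>i\<in>I. ennreal (exp (- t * S i \<omega>))) \<partial>M)
      = (\<Prod>i\<in>I. \<integral>\<^sup>+\<omega>. exp (- t * S i \<omega>) \<partial>M)"
    using \<open>finite I\<close> by (intro indep_vars_nn_integral indep_vars_compose2[OF indep]) auto
  finally show ?thesis .
qed

lemma (in prob_space) emeasure_exponential_sum_le:
  assumes "indep_vars (\<lambda>_. borel) S I" and "finite I" and "0 < l"
    and "\<And>i. i \<in> I \<Longrightarrow> distributed M lborel (S i) (exponential_density l)"
  shows "emeasure M {\<omega>\<in>space M. (\<Sum>i\<in>I. S i \<omega>) \<le> T} \<le> exp (l * T) / 2 ^ card I"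
proof -
  have "(\<integral>\<^sup>+\<omega>. exp (- l * S i \<omega>) \<partial>M) = ennreal (1/2)" if "i \<in> I" for i
    using nn_integral_exp_exponential[OF assms(4)[OF that], of l] \<open>0 < l\<close> by simp
  then have "(\<Prod>i\<in>I. \<integral>\<^sup>+\<omega>. exp (- l * S i \<omega>) \<partial>M) = ennreal (1/2) ^ card I"
    by simp
  also have "\<dots> = ennreal ((1/2) ^ card I)"
    by (rule ennreal_power) simp
  finally have "(\<Prod>i\<in>I. \<integral>\<^sup>+\<omega>. exp (- l * S i \<omega>) \<partial>M) = ennreal ((1/2) ^ card I)" .
  then have "emeasure M {\<omega>\<in>space M. (\<Sum>i\<in>I. S i \<omega>) \<le> T} \<le> exp (l * T) * ennreal ((1/2) ^ card I)"
    using emeasure_sum_le_Chernoff[OF assms(1,2), of l T] \<open>0 < l\<close> by simp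
  also have "\<dots> = exp (l * T) / 2 ^ card I"
    by (simp add: ennreal_mult'[symmetric] power_one_over)
  finally show ?thesis .
qed

lemma sum_le_if_less_stop_time:
  assumes "n < stop_time T S X a \<omega>" and "\<And>i. 0 \<le> X i \<omega> * a i \<omega>"
  shows "(\<Sum>i=1..n. S i \<omega>) \<le> T"
proof -
  have "(\<Sum>i=1..n. S i \<omega>) \<le> (\<Sum>i=1..n. S i \<omega> + X i \<omega> * a i \<omega>)"
    using assms(2) by (intro sum_mono) simp
  also have "\<dots> \<le> T"
    using not_less_Least[OF assms(1)[unfolded stop_time_def]] by simp
  finally show ?thesis .
qed

lemma excess_stop_time_le_suminf:
  assumes "0 \<le> c" and "\<And>i. 0 \<le> X i \<omega> * a i \<omega>"
  shows "ennreal (max (real (stop_time T S X a \<omega>) - c) 0)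
    \<le> (\<Sum>k. if (\<Sum>i=1..nat \<lfloor>c + real k\<rfloor>. S i \<omega>) \<le> T then 1 else 0)"
proof -
  have "(if real k < real (stop_time T S X a \<omega>) - c then 1 else 0)
      \<le> (if (\<Sum>i=1..nat \<lfloor>c + real k\<rfloor>. S i \<omega>) \<le> T then 1 else 0 :: ennreal)" for k
  proof (cases "real k < real (stop_time T S X a \<omega>) - c")
    case True
    have "real (nat \<lfloor>c + real k\<rfloor>) \<le> c + real k"
      using assms(1) by linarith
    then have "nat \<lfloor>c + real k\<rfloor> < stop_time T S X a \<omega>"
      using True by linarith
    then have "(\<Sum>i=1..nat \<lfloor>c + real k\<rfloor>. S i \<omega>) \<le> T"
      using assms(2) by (rule sum_le_if_less_stop_time)
    then show ?thesis
      using True by simp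
  qed simp
  then have "(\<Sum>k. if real k < real (stop_time T S X a \<omega>) - c then 1 else 0)
      \<le> (\<Sum>k. if (\<Sum>i=1..nat \<lfloor>c + real k\<rfloor>. S i \<omega>) \<le> T then 1 else 0 :: ennreal)"
    by (intro suminf_le) auto
  then show ?thesis
    using ennreal_le_suminf_less[of "real (stop_time T S X a \<omega>) - c"] by (simp add: ennreal_max_0)
qed

lemma (in prob_space) emeasure_exponential_partial_sum_le:
  assumes "indep_vars (\<lambda>_. borel) S UNIV" and "0 < l" and "0 \<le> T"
    and "\<And>i. distributed M lborel (S i) (exponential_density l)"
  shows "emeasure M {\<omega>\<in>space M. (\<Sum>i=1..nat \<lfloor>2 * l * T + 1 + real k\<rfloor>. S i \<omega>) \<le> T}
    \<le> ennreal ((1/2) ^ k)"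
proof -
  define n where "n = nat \<lfloor>2 * l * T + 1 + real k\<rfloor>"
  have "0 \<le> l * T"
    using assms(2,3) by simp
  then have n_ge: "2 * (l * T) + real k \<le> real n"
    unfolding n_def by linarith
  have "emeasure M {\<omega>\<in>space M. (\<Sum>i=1..n. S i \<omega>) \<le> T} \<le> exp (l * T) / 2 ^ card {1..n}"
    using indep_vars_subset[OF assms(1)] assms(2,4) by (intro emeasure_exponential_sum_le) auto
  also have "exp (l * T) / 2 ^ card {1..n} \<le> (1/2) ^ k"
    using \<open>0 \<le> l * T\<close> n_ge by (simp add: exp_div_two_pow_le)
  finally show ?thesis
    unfolding n_def by (simp add: ennreal_leI)
qed

theorem lemmaF4:
  fixes M :: "'a measure" and S X a :: "nat \<Rightarrow> 'a \<Rightarrow> real" and l T :: real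
  assumes "prob_space M"
    and "l > 0" and "T > 0"
    and "\<And>i. X i \<in> borel_measurable M" and "\<And>i \<omega>. \<omega> \<in> space M \<Longrightarrow> X i \<omega> \<ge> 0"
    and "\<And>i. a i \<in> borel_measurable M" and "\<And>i \<omega>. \<omega> \<in> space M \<Longrightarrow> a i \<omega> \<in> {0, 1}"
    and "prob_space.indep_vars M (\<lambda>_. borel) S UNIV"
    and "\<And>i. distributed M lborel (S i) (exponential_density l)"
  shows "(\<integral>\<^sup>+ \<omega>. ennreal (max (real (stop_time T S X a \<omega>) - (2 * l * T + 1)) 0) \<partial>M) \<le> 4"
proof -
  interpret prob_space M by fact
  note S_measurable[measurable] = distributed_measurable[OF assms(9), simplified]
  define c where "c = 2 * l * T + 1"
  define A where "A k = {\<omega>\<in>space M. (\<Sum>i=1..nat \<lfloor>c + real k\<rfloor>. S i \<omega>) \<le> T}" for k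
  have "(\<integral>\<^sup>+ \<omega>. ennreal (max (real (stop_time T S X a \<omega>) - c) 0) \<partial>M)
      \<le> (\<integral>\<^sup>+ \<omega>. (\<Sum>k. indicator (A k) \<omega>) \<partial>M)"
  proof (rule nn_integral_mono)
    fix \<omega> assume "\<omega> \<in> space M"
    have "0 \<le> X i \<omega> * a i \<omega>" for i
      using assms(5,7)[OF \<open>\<omega> \<in> space M\<close>, of i] by auto
    moreover have "0 \<le> c"
      using assms(2,3) by (simp add: c_def)
    moreover have "indicator (A k) \<omega>
        = (if (\<Sum>i=1..nat \<lfloor>c + real k\<rfloor>. S i \<omega>) \<le> T then 1 else 0 :: ennreal)" for k
      using \<open>\<omega> \<in> space M\<close> by (simp add: A_def)
    ultimately show "ennreal (max (real (stop_time T S X a \<omega>) - c) 0) \<le> (\<Sum>k. indicator (A k) \<omega>)"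
      using excess_stop_time_le_suminf[of c X \<omega> a T S] by simp
  qed
  also have "\<dots> = (\<Sum>k. emeasure M (A k))"
    by (subst nn_integral_suminf) (auto simp: A_def)
  also have "\<dots> \<le> (\<Sum>k. ennreal ((1/2) ^ k))"
    unfolding A_def c_def using assms(2,3,8,9)
    by (intro suminf_le emeasure_exponential_partial_sum_le) auto
  also have "\<dots> = 2"
    by (simp add: suminf_ennreal2 suminf_geometric)
  finally show ?thesis
    unfolding c_def by (rule order_trans) simp
qed

end
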